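(* Let $(\mathfrak{A},\mathfrak{A}_0)$ be a CQ*-algebra as in the context, and let $\mathfrak{A}_1$ be the completion of $\mathfrak{A}_0$ with respect to the inductive limit topology $\tau_{ind}$. Then $$\mathfrak{A}_0=\bigcup_{N\in\mathbb{N}}\mathfrak{A}_0(N)\subset\mathfrak{A}_1=\bigcup_{N\in\mathbb{N}}\overline{\mathfrak{A}_0(N)}[d_N]\subset\mathfrak{A},$$ where $\overline{\mathfrak{A}_0(N)}[d_N]$ is the completion of the metric space $(\mathfrak{A}_0(N),d_N)$ (realized as the $\|\cdot\|$-closure of $\mathfrak{A}_0(N)$ in $\mathfrak{A}$), and $\mathfrak{A}_1$, equipped with the norm $\|\cdot\|$, is a locally convex $*$-algebra: for $X,Y\in\mathfrak{A}_1$ and sequences $\{A_n\},\{B_n\}\subset\mathfrak{A}_0(N)$ (some $N$) with $\|A_n-X\|\to0$, $\|B_n-Y\|\to0$, the limit $XY:=\|\cdot\|\text{-}\lim_n A_nB_n$ exists in $\mathfrak{A}_1$ and is independent of the chosen sequences, this multiplication extends that of $\mathfrak{A}_0$, is separately $\|\cdot\|$-continuous, and $\|X^*\|=\|X\|$.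
   Context: Let $\mathfrak{A}_0$ be a unital C*-algebra with C*-norm $\|\cdot\|_0$, and $\|\cdot\|$ another norm on $\mathfrak{A}_0$ with $\|A\|\le\|A\|_0$, $\|AB\|\le\|A\|\,\|B\|_0$, $\|A^*\|=\|A\|$. $\mathfrak{A}$ is the Banach space completion of $(\mathfrak{A}_0,\|\cdot\|)$, with involution $X^*:=\lim A_n^*$ for $A_n\in\mathfrak{A}_0$, $\|A_n-X\|\to0$. For $N\in\mathbb{N}$ let $\mathfrak{A}_0(N)=\{A\in\mathfrak{A}_0:\|A\|_0\le N\}$ with metric $d_N(A,B)=\|A-B\|$. The inductive limit topology $\tau_{ind}$ on $\mathfrak{A}_0$ is defined by: $\tau_{ind}$-$\lim A_n=A$ iff $\{A_n\}\subset\mathfrak{A}_0(N)$ for some $N$ and $\|A_n-A\|\to0$. *)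

theory Defs
  imports "HOL-Analysis.Analysis"
begin

text \<open>A unital C*-algebra (with C*-norm = the library norm of the type 'b, which is a
  real Banach algebra with unit), complex scalar multiplication cs and involution st.\<close>
definition cstar_algebra ::
  "(complex \<Rightarrow> 'b::{real_normed_algebra_1,banach} \<Rightarrow> 'b) \<Rightarrow> ('b \<Rightarrow> 'b) \<Rightarrow> bool" where
  "cstar_algebra cs st \<longleftrightarrow>
     (\<forall>r x. cs (complex_of_real r) x = r *\<^sub>R x) \<and>
     (\<forall>a b x. cs (a * b) x = cs a (cs b x)) \<and>
     (\<forall>a b x. cs (a + b) x = cs a x + cs b x) \<and>
     (\<forall>a x y. cs a (x + y) = cs a x + cs a y) \<and>
     (\<forall>a x y. cs a (x * y) = cs a x * y \<and> cs a (x * y) = x * cs a y) \<and>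
     (\<forall>a x. norm (cs a x) = cmod a * norm x) \<and>
     (\<forall>x. st (st x) = x) \<and>
     (\<forall>x y. st (x + y) = st x + st y) \<and>
     (\<forall>a x. st (cs a x) = cs (cnj a) (st x)) \<and>
     (\<forall>x y. st (x * y) = st y * st x) \<and>
     (\<forall>x. norm (st x * x) = (norm x)\<^sup>2)"

text \<open>The completion of A0 w.r.t. the inductive limit topology, realized inside A:
  limits of tau_ind-Cauchy sequences (sequences in some A0(N), Cauchy for the norm of A).\<close>
definition ind_completion :: "('b::real_normed_vector \<Rightarrow> 'a::metric_space) \<Rightarrow> 'a set" where
  "ind_completion j = {X. \<exists>N::nat. \<exists>A. (\<forall>n. norm (A n) \<le> real N) \<and>
       Cauchy (\<lambda>n. j (A n)) \<and> (\<lambda>n. j (A n)) \<longlonglongrightarrow> X}"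

definition ind_prod :: "('b::real_normed_algebra \<Rightarrow> 'a::metric_space) \<Rightarrow> 'a \<Rightarrow> 'a \<Rightarrow> 'a" where
  "ind_prod j X Y = (THE Z. \<forall>N::nat. \<forall>A B.
      (\<forall>n. norm (A n) \<le> real N \<and> norm (B n) \<le> real N) \<and>
      (\<lambda>n. j (A n)) \<longlonglongrightarrow> X \<and> (\<lambda>n. j (B n)) \<longlonglongrightarrow> Y \<longrightarrow>
      (\<lambda>n. j (A n * B n)) \<longlonglongrightarrow> Z)"

definition star_ext :: "('b \<Rightarrow> 'a::metric_space) \<Rightarrow> ('b \<Rightarrow> 'b) \<Rightarrow> 'a \<Rightarrow> 'a" where
  "star_ext j st X = (THE Y. \<forall>A. (\<lambda>n. j (A n)) \<longlonglongrightarrow> X \<longrightarrow> (\<lambda>n. j (st (A n))) \<longlonglongrightarrow> Y)"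

end

theory Submission
  imports Defs
begin

text \<open>Everything rests on the estimate
  \<open>\<parallel>j(ab) - j(a'b')\<parallel> \<le> \<parallel>b\<parallel>\<cdot>\<parallel>j a - j a'\<parallel> + \<parallel>a'\<parallel>\<cdot>\<parallel>j b - j b'\<parallel>\<close>. Its second term needs the
  bound \<open>\<parallel>j(ac)\<parallel> \<le> \<parallel>a\<parallel>\<cdot>\<parallel>j c\<parallel>\<close> for multiplication on the left, which is the assumed bound
  \<open>\<parallel>j(ca)\<parallel> \<le> \<parallel>j c\<parallel>\<cdot>\<parallel>a\<parallel>\<close> transported through the involution, an isometry for both norms.
  Hence on sequences bounded in \<open>\<parallel>\<cdot>\<parallel>\<^sub>0\<close> the product maps \<open>\<parallel>\<cdot>\<parallel>\<close>-Cauchy sequences to Cauchy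
  sequences, and the limit depends only on the limits of the factors, Lipschitz in each of them.\<close>

lemma Cauchy_if_dist_le:
  fixes f :: "nat \<Rightarrow> 'a::metric_space" and g :: "nat \<Rightarrow> 'b::metric_space"
  assumes "Cauchy g" and dist_le: "\<And>m n. dist (f m) (f n) \<le> K * dist (g m) (g n)"
  shows "Cauchy f"
proof (rule metric_CauchyI)
  fix e :: real assume "0 < e"
  then obtain M where M: "\<forall>m\<ge>M. \<forall>n\<ge>M. dist (g m) (g n) < e / (\<bar>K\<bar> + 1)"
    using \<open>Cauchy g\<close> unfolding Cauchy_def by (metis divide_pos_pos abs_ge_zero add_nonneg_pos zero_less_one)
  have "dist (f m) (f n) < e" if "m \<ge> M" "n \<ge> M" for m n
  proof -
    have "dist (f m) (f n) \<le> \<bar>K\<bar> * dist (g m) (g n)"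
      using dist_le[of m n] by (meson abs_ge_self mult_right_mono order_trans zero_le_dist)
    also have "\<dots> \<le> \<bar>K\<bar> * (e / (\<bar>K\<bar> + 1))"
      using M that by (intro mult_left_mono) (auto simp: less_imp_le)
    also have "\<dots> < e"
      using \<open>0 < e\<close> by (simp add: field_simps)
    finally show ?thesis .
  qed
  then show "\<exists>M. \<forall>m\<ge>M. \<forall>n\<ge>M. dist (f m) (f n) < e" by blast
qed

lemma dist_limits_le:
  fixes f g :: "nat \<Rightarrow> 'a::metric_space"
  assumes "f \<longlonglongrightarrow> Z" "g \<longlonglongrightarrow> Z'" "e \<longlonglongrightarrow> E" "\<And>n. dist (f n) (g n) \<le> e n"
  shows "dist Z Z' \<le> E"
  using tendsto_le[OF trivial_limit_sequentially assms(3) tendsto_dist[OF assms(1,2)]] assms(4)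
  by simp

lemma norm_involution:
  fixes st :: "'b::real_normed_algebra \<Rightarrow> 'b"
  assumes st_st: "\<And>x. st (st x) = x" and cstar: "\<And>x. norm (st x * x) = (norm x)\<^sup>2"
  shows "norm (st x) = norm x"
proof -
  have le: "norm y \<le> norm (st y)" for y
  proof -
    have "(norm y)\<^sup>2 \<le> norm (st y) * norm y"
      using cstar[of y] norm_mult_ineq[of "st y" y] by simp
    then show ?thesis
      by (cases "y = 0") (simp_all add: power2_eq_square)
  qed
  show ?thesis using le[of x] le[of "st x"] st_st[of x] by simp
qed

lemma range_eq_Union_norm_le:
  fixes f :: "'b::real_normed_vector \<Rightarrow> 'a"
  shows "range f = (\<Union>N::nat. f ` {a. norm a \<le> real N})"
  using real_nat_ceiling_ge by blast

lemma ind_completion_iff: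
  "X \<in> ind_completion j \<longleftrightarrow> (\<exists>N::nat. \<exists>A. (\<forall>n. norm (A n) \<le> real N) \<and> (\<lambda>n. j (A n)) \<longlonglongrightarrow> X)"
  unfolding ind_completion_def using LIMSEQ_imp_Cauchy by blast

lemma ind_completion_eq_Union_closure:
  "ind_completion j = (\<Union>N::nat. closure (j ` {a. norm a \<le> real N}))"
proof (intro set_eqI iffI)
  fix X assume "X \<in> ind_completion j"
  then obtain N A where "\<forall>n. norm (A n) \<le> real N" "(\<lambda>n. j (A n)) \<longlonglongrightarrow> X"
    unfolding ind_completion_iff by blast
  then have "X \<in> closure (j ` {a. norm a \<le> real N})"
    unfolding closure_sequential by (intro exI[of _ "\<lambda>n. j (A n)"]) auto
  then show "X \<in> (\<Union>N::nat. closure (j ` {a. norm a \<le> real N}))" by blast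
next
  fix X assume "X \<in> (\<Union>N::nat. closure (j ` {a. norm a \<le> real N}))"
  then obtain N :: nat where "X \<in> closure (j ` {a. norm a \<le> real N})" by blast
  then obtain x where x: "\<forall>n. x n \<in> j ` {a. norm a \<le> real N}" "x \<longlonglongrightarrow> X"
    unfolding closure_sequential by blast
  then have "\<forall>n. \<exists>a. norm a \<le> real N \<and> x n = j a" by blast
  then obtain A where A: "\<forall>n. norm (A n) \<le> real N \<and> x n = j (A n)" by metis
  then have "(\<lambda>n. j (A n)) \<longlonglongrightarrow> X"
    using x(2) by (metis (no_types, lifting) ext)
  then show "X \<in> ind_completion j"
    unfolding ind_completion_iff using A by blast
qed

lemma ind_completion_common_bound:
  assumes "X \<in> ind_completion j" "Y \<in> ind_completion j"
  obtains N :: nat and A B where "\<forall>n. norm (A n) \<le> real N \<and> norm (B n) \<le> real N"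
    "(\<lambda>n. j (A n)) \<longlonglongrightarrow> X" "(\<lambda>n. j (B n)) \<longlonglongrightarrow> Y"
proof -
  obtain N A M B where "\<forall>n. norm (A n) \<le> real N" "(\<lambda>n. j (A n)) \<longlonglongrightarrow> X"
      "\<forall>n. norm (B n) \<le> real M" "(\<lambda>n. j (B n)) \<longlonglongrightarrow> Y"
    using assms unfolding ind_completion_iff by blast
  moreover have "real N \<le> real (max N M)" "real M \<le> real (max N M)" by simp_all
  ultimately show thesis using that[where N = "max N M" and A = A and B = B] by (meson order_trans)
qed

locale cq_embedding =
  fixes j :: "'b::real_normed_algebra \<Rightarrow> 'a::banach" and st :: "'b \<Rightarrow> 'b"
  assumes j_linear: "linear j"
    and star_star: "\<And>x. st (st x) = x"
    and star_add: "\<And>x y. st (x + y) = st x + st y"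
    and star_mult: "\<And>x y. st (x * y) = st y * st x"
    and norm_star_mult_self: "\<And>x. norm (st x * x) = (norm x)\<^sup>2"
    and norm_j_mult_le: "\<And>a b. norm (j (a * b)) \<le> norm (j a) * norm b"
    and norm_j_star: "\<And>a. norm (j (st a)) = norm (j a)"
begin

lemma norm_star: "norm (st x) = norm x"
  by (rule norm_involution[OF star_star norm_star_mult_self])

lemma star_diff: "st (a - b) = st a - st b"
  using star_add[of "a - b" b] by (simp add: eq_diff_eq)

lemma j_diff: "j (a - b) = j a - j b"
  by (rule linear_diff[OF j_linear])

lemma norm_j_mult_le_left: "norm (j (a * b)) \<le> norm a * norm (j b)"
proof -
  have "norm (j (a * b)) = norm (j (st b * st a))"
    using norm_j_star[of "a * b"] by (simp add: star_mult)
  also have "\<dots> \<le> norm (j (st b)) * norm (st a)" by (rule norm_j_mult_le)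
  finally show ?thesis by (simp add: norm_j_star norm_star mult.commute)
qed

lemma dist_j_mult_le:
  "dist (j (a * b)) (j (a' * b')) \<le> norm b * dist (j a) (j a') + norm a' * dist (j b) (j b')"
proof -
  have "j (a * b) - j (a' * b') = j ((a - a') * b) + j (a' * (b - b'))"
    by (simp add: j_diff linear_add[OF j_linear] algebra_simps)
  then have "dist (j (a * b)) (j (a' * b')) \<le> norm (j ((a - a') * b)) + norm (j (a' * (b - b')))"
    by (simp add: dist_norm norm_triangle_ineq)
  also have "\<dots> \<le> norm (j (a - a')) * norm b + norm a' * norm (j (b - b'))"
    by (intro add_mono norm_j_mult_le norm_j_mult_le_left)
  finally show ?thesis by (simp add: dist_norm j_diff mult.commute)
qed

lemma dist_j_mult_le_bounded:
  assumes "norm b \<le> L" "norm a' \<le> K"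
  shows "dist (j (a * b)) (j (a' * b')) \<le> L * dist (j a) (j a') + K * dist (j b) (j b')"
proof -
  have "norm b * dist (j a) (j a') + norm a' * dist (j b) (j b')
      \<le> L * dist (j a) (j a') + K * dist (j b) (j b')"
    using assms by (intro add_mono mult_right_mono) simp_all
  with dist_j_mult_le show ?thesis by (rule order_trans)
qed

lemma dist_j_star: "dist (j (st a)) (j (st b)) = dist (j a) (j b)"
  by (metis dist_norm j_diff star_diff norm_j_star)

lemma convergent_j_mult:
  assumes "\<forall>n. norm (A n) \<le> K" "\<forall>n. norm (B n) \<le> L"
    and "(\<lambda>n. j (A n)) \<longlonglongrightarrow> X" "(\<lambda>n. j (B n)) \<longlonglongrightarrow> Y"
  shows "convergent (\<lambda>n. j (A n * B n))"
proof -
  have "Cauchy (\<lambda>n. (j (A n), j (B n)))"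
    using tendsto_Pair[OF assms(3,4)] by (rule LIMSEQ_imp_Cauchy)
  moreover have "dist (j (A m * B m)) (j (A n * B n)) \<le> (L + K) * dist (j (A m), j (B m)) (j (A n), j (B n))"
    for m n
  proof -
    have "dist (j (A m * B m)) (j (A n * B n)) \<le> L * dist (j (A m)) (j (A n)) + K * dist (j (B m)) (j (B n))"
      using assms(1,2) by (intro dist_j_mult_le_bounded) simp_all
    also have "\<dots> \<le> L * dist (j (A m), j (B m)) (j (A n), j (B n)) + K * dist (j (A m), j (B m)) (j (A n), j (B n))"
      using assms(1,2) dist_fst_le[of "(j (A m), j (B m))" "(j (A n), j (B n))"]
        dist_snd_le[of "(j (A m), j (B m))" "(j (A n), j (B n))"]
      by (intro add_mono mult_left_mono) (auto intro: order_trans[OF norm_ge_zero])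
    finally show ?thesis by (simp add: distrib_right)
  qed
  ultimately have "Cauchy (\<lambda>n. j (A n * B n))"
    by (rule Cauchy_if_dist_le)
  then show ?thesis by (simp add: Cauchy_convergent_iff)
qed

lemma ind_prod_tendsto:
  assumes bounded: "\<forall>n. norm (A n) \<le> K" "\<forall>n. norm (B n) \<le> L"
    and lim: "(\<lambda>n. j (A n)) \<longlonglongrightarrow> X" "(\<lambda>n. j (B n)) \<longlonglongrightarrow> Y"
  shows "(\<lambda>n. j (A n * B n)) \<longlonglongrightarrow> ind_prod j X Y"
proof -
  obtain Z where Z: "(\<lambda>n. j (A n * B n)) \<longlonglongrightarrow> Z"
    using convergent_j_mult[OF assms] by (auto simp: convergent_def)
  have Z_unique: "(\<lambda>n. j (A' n * B' n)) \<longlonglongrightarrow> Z"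
    if bounded': "\<forall>n. norm (A' n) \<le> real N \<and> norm (B' n) \<le> real N"
      and lim': "(\<lambda>n. j (A' n)) \<longlonglongrightarrow> X" "(\<lambda>n. j (B' n)) \<longlonglongrightarrow> Y" for N :: nat and A' B'
  proof -
    obtain Z' where Z': "(\<lambda>n. j (A' n * B' n)) \<longlonglongrightarrow> Z'"
      using convergent_j_mult[of A' N B' N X Y] bounded' lim' by (auto simp: convergent_def)
    have "(\<lambda>n. L * dist (j (A n)) (j (A' n)) + N * dist (j (B n)) (j (B' n)))
        \<longlonglongrightarrow> L * dist X X + N * dist Y Y"
      using lim lim' by (intro tendsto_intros)
    moreover have "dist (j (A n * B n)) (j (A' n * B' n))
        \<le> L * dist (j (A n)) (j (A' n)) + N * dist (j (B n)) (j (B' n))" for n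
      using bounded bounded' by (intro dist_j_mult_le_bounded) simp_all
    ultimately have "dist Z Z' \<le> L * dist X X + N * dist Y Y"
      by (rule dist_limits_le[OF Z Z'])
    then show ?thesis using Z' by simp
  qed
  have "ind_prod j X Y = Z"
    unfolding ind_prod_def
  proof (rule the_equality)
    fix Z''
    assume "\<forall>N::nat. \<forall>A B. (\<forall>n. norm (A n) \<le> real N \<and> norm (B n) \<le> real N) \<and>
      (\<lambda>n. j (A n)) \<longlonglongrightarrow> X \<and> (\<lambda>n. j (B n)) \<longlonglongrightarrow> Y \<longrightarrow> (\<lambda>n. j (A n * B n)) \<longlonglongrightarrow> Z''"
    moreover have "\<forall>n. norm (A n) \<le> real (nat \<lceil>max K L\<rceil>) \<and> norm (B n) \<le> real (nat \<lceil>max K L\<rceil>)"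
      using bounded by (meson max.cobounded1 max.cobounded2 order_trans real_nat_ceiling_ge)
    ultimately have "(\<lambda>n. j (A n * B n)) \<longlonglongrightarrow> Z''" using lim by blast
    then show "Z'' = Z" using Z LIMSEQ_unique by blast
  qed (use Z_unique in blast)
  then show ?thesis using Z by simp
qed

lemma ind_prod_j: "ind_prod j (j a) (j b) = j (a * b)"
  using ind_prod_tendsto[of "\<lambda>_. a" "norm a" "\<lambda>_. b" "norm b" "j a" "j b"]
  by (simp add: LIMSEQ_const_iff)

lemma ind_prod_mem:
  assumes "X \<in> ind_completion j" "Y \<in> ind_completion j"
  shows "ind_prod j X Y \<in> ind_completion j"
proof -
  obtain N A B where bounded: "\<forall>n. norm (A n) \<le> real N \<and> norm (B n) \<le> real N"
      and lim: "(\<lambda>n. j (A n)) \<longlonglongrightarrow> X" "(\<lambda>n. j (B n)) \<longlonglongrightarrow> Y"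
    using ind_completion_common_bound[OF assms] .
  have "\<forall>n. norm (A n * B n) \<le> real (N * N)"
  proof
    fix n
    have "norm (A n * B n) \<le> norm (A n) * norm (B n)" by (rule norm_mult_ineq)
    also have "\<dots> \<le> real N * real N" using bounded by (intro mult_mono) auto
    finally show "norm (A n * B n) \<le> real (N * N)" by simp
  qed
  moreover have "(\<lambda>n. j (A n * B n)) \<longlonglongrightarrow> ind_prod j X Y"
    using bounded lim by (intro ind_prod_tendsto[of A "real N" B "real N"]) simp_all
  ultimately show ?thesis
    unfolding ind_completion_iff by (intro exI[of _ "N * N"] exI[of _ "\<lambda>n. A n * B n"] conjI)
qed

lemma dist_ind_prod_le:
  assumes bounded: "\<forall>n. norm (A n) \<le> K" and lim: "(\<lambda>n. j (A n)) \<longlonglongrightarrow> X"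
    and Y: "Y \<in> ind_completion j" and Y': "Y' \<in> ind_completion j"
  shows "dist (ind_prod j X Y) (ind_prod j X Y') \<le> K * dist Y Y'"
    and "dist (ind_prod j Y X) (ind_prod j Y' X) \<le> K * dist Y Y'"
proof -
  obtain N B N' B' where B: "\<forall>n. norm (B n) \<le> real N" "(\<lambda>n. j (B n)) \<longlonglongrightarrow> Y"
      and B': "\<forall>n. norm (B' n) \<le> real N'" "(\<lambda>n. j (B' n)) \<longlonglongrightarrow> Y'"
    using Y Y' unfolding ind_completion_iff by blast
  have dist_B: "(\<lambda>n. K * dist (j (B n)) (j (B' n))) \<longlonglongrightarrow> K * dist Y Y'"
    using B(2) B'(2) by (intro tendsto_intros)
  show "dist (ind_prod j X Y) (ind_prod j X Y') \<le> K * dist Y Y'"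
  proof (rule dist_limits_le[OF _ _ dist_B])
    show "dist (j (A n * B n)) (j (A n * B' n)) \<le> K * dist (j (B n)) (j (B' n))" for n
      using dist_j_mult_le[of "A n" "B n" "A n" "B' n"] bounded
      by (simp add: mult_right_mono order_trans)
  qed (fact ind_prod_tendsto[OF bounded B(1) lim B(2)] ind_prod_tendsto[OF bounded B'(1) lim B'(2)])+
  show "dist (ind_prod j Y X) (ind_prod j Y' X) \<le> K * dist Y Y'"
  proof (rule dist_limits_le[OF _ _ dist_B])
    show "dist (j (B n * A n)) (j (B' n * A n)) \<le> K * dist (j (B n)) (j (B' n))" for n
      using dist_j_mult_le[of "B n" "A n" "B' n" "A n"] bounded
      by (simp add: mult_right_mono order_trans)
  qed (fact ind_prod_tendsto[OF B(1) bounded B(2) lim] ind_prod_tendsto[OF B'(1) bounded B'(2) lim])+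
qed

lemma continuous_on_ind_prod:
  assumes "X \<in> ind_completion j"
  shows "continuous_on (ind_completion j) (ind_prod j X)"
    and "continuous_on (ind_completion j) (\<lambda>Y. ind_prod j Y X)"
proof -
  obtain N A where "\<forall>n. norm (A n) \<le> real N" "(\<lambda>n. j (A n)) \<longlonglongrightarrow> X"
    using assms unfolding ind_completion_iff by blast
  note dist_le = dist_ind_prod_le[OF this]
  show "continuous_on (ind_completion j) (ind_prod j X)"
    by (rule lipschitz_on_continuous_on[OF lipschitz_onI[OF dist_le(1)]]) simp_all
  show "continuous_on (ind_completion j) (\<lambda>Y. ind_prod j Y X)"
    by (rule lipschitz_on_continuous_on[OF lipschitz_onI[OF dist_le(2)]]) simp_all
qed

lemma star_ext_tendsto:
  assumes lim: "(\<lambda>n. j (A n)) \<longlonglongrightarrow> X"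
  shows "(\<lambda>n. j (st (A n))) \<longlonglongrightarrow> star_ext j st X"
proof -
  have convergent: "convergent (\<lambda>n. j (st (A' n)))" if "(\<lambda>n. j (A' n)) \<longlonglongrightarrow> X" for A'
  proof -
    have "Cauchy (\<lambda>n. j (st (A' n)))"
      by (rule Cauchy_if_dist_le[OF LIMSEQ_imp_Cauchy[OF that], of _ 1]) (simp add: dist_j_star)
    then show ?thesis by (simp add: Cauchy_convergent_iff)
  qed
  then obtain Y where Y: "(\<lambda>n. j (st (A n))) \<longlonglongrightarrow> Y"
    using lim by (auto simp: convergent_def)
  have Y_unique: "(\<lambda>n. j (st (A' n))) \<longlonglongrightarrow> Y" if lim': "(\<lambda>n. j (A' n)) \<longlonglongrightarrow> X" for A'
  proof -
    obtain Y' where Y': "(\<lambda>n. j (st (A' n))) \<longlonglongrightarrow> Y'"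
      using convergent[OF lim'] by (auto simp: convergent_def)
    have "dist Y Y' \<le> dist X X"
      by (rule dist_limits_le[OF Y Y' tendsto_dist[OF lim lim']]) (simp add: dist_j_star)
    then show ?thesis using Y' by simp
  qed
  have "star_ext j st X = Y"
    unfolding star_ext_def using Y_unique lim Y LIMSEQ_unique by (intro the_equality) blast+
  then show ?thesis using Y by simp
qed

lemma star_ext_mem_norm:
  assumes "X \<in> ind_completion j"
  shows "star_ext j st X \<in> ind_completion j" and "norm (star_ext j st X) = norm X"
proof -
  obtain N A where bounded: "\<forall>n. norm (A n) \<le> real N" and lim: "(\<lambda>n. j (A n)) \<longlonglongrightarrow> X"
    using assms unfolding ind_completion_iff by blast
  note lim_star = star_ext_tendsto[OF lim]
  have "\<forall>n. norm (st (A n)) \<le> real N"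
    using bounded by (simp add: norm_star)
  then show "star_ext j st X \<in> ind_completion j"
    unfolding ind_completion_iff using lim_star by (intro exI[of _ N] exI[of _ "\<lambda>n. st (A n)"] conjI)
  show "norm (star_ext j st X) = norm X"
    using tendsto_norm[OF lim_star] tendsto_norm[OF lim] by (simp add: norm_j_star LIMSEQ_unique)
qed

end

theorem proposition6p1:
  fixes j :: "'b::{real_normed_algebra_1,banach} \<Rightarrow> 'a::banach"
    and cs :: "complex \<Rightarrow> 'b \<Rightarrow> 'b" and st :: "'b \<Rightarrow> 'b"
  assumes cstar: "cstar_algebra cs st"
    and lin: "linear j" and inj: "inj j"
    and hom: "\<forall>c a. norm (j (cs c a)) = cmod c * norm (j a)"
    and le0: "\<forall>a. norm (j a) \<le> norm a"
    and mult: "\<forall>a b. norm (j (a * b)) \<le> norm (j a) * norm b"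
    and invol: "\<forall>a. norm (j (st a)) = norm (j a)"
    and dense: "closure (range j) = UNIV"
  shows "range j = (\<Union>N::nat. j ` {a. norm a \<le> real N})
    \<and> range j \<subseteq> ind_completion j
    \<and> ind_completion j = (\<Union>N::nat. closure (j ` {a. norm a \<le> real N}))
    \<and> (\<forall>X\<in>ind_completion j. \<forall>Y\<in>ind_completion j.
          ind_prod j X Y \<in> ind_completion j \<and>
          (\<forall>N::nat. \<forall>A B. (\<forall>n. norm (A n) \<le> real N \<and> norm (B n) \<le> real N) \<and>
             (\<lambda>n. j (A n)) \<longlonglongrightarrow> X \<and> (\<lambda>n. j (B n)) \<longlonglongrightarrow> Y \<longrightarrow>
             (\<lambda>n. j (A n * B n)) \<longlonglongrightarrow> ind_prod j X Y))
    \<and> (\<forall>a b. ind_prod j (j a) (j b) = j (a * b))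
    \<and> (\<forall>X\<in>ind_completion j.
          continuous_on (ind_completion j) (ind_prod j X) \<and>
          continuous_on (ind_completion j) (\<lambda>Y. ind_prod j Y X))
    \<and> (\<forall>X\<in>ind_completion j.
          star_ext j st X \<in> ind_completion j \<and> norm (star_ext j st X) = norm X)"
proof -
  interpret cq_embedding j st
    using cstar lin mult invol unfolding cstar_algebra_def cq_embedding_def by auto
  have range_j: "range j = (\<Union>N::nat. j ` {a. norm a \<le> real N})"
    by (rule range_eq_Union_norm_le)
  have range_subset: "range j \<subseteq> ind_completion j"
    unfolding range_j ind_completion_eq_Union_closure by (intro UN_mono closure_subset order_refl)
  have prod_tendsto: "(\<lambda>n. j (A n * B n)) \<longlonglongrightarrow> ind_prod j X Y"
    if "(\<forall>n. norm (A n) \<le> real N \<and> norm (B n) \<le> real N) \<and>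
      (\<lambda>n. j (A n)) \<longlonglongrightarrow> X \<and> (\<lambda>n. j (B n)) \<longlonglongrightarrow> Y" for N :: nat and A B X Y
    using that by (intro ind_prod_tendsto[of A "real N" B "real N"]) simp_all
  show ?thesis
    by (intro conjI ballI allI impI)
      (assumption | rule range_j range_subset ind_completion_eq_Union_closure prod_tendsto
        ind_prod_mem ind_prod_j continuous_on_ind_prod star_ext_mem_norm)+
qed

end
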